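(* Let $v$ be a prime and let $\mathcal C$ be an a-proper $(v,w,w-1,\lambda_c)$-OOC. Then $\mathcal C$ contains a sequence whose set of positions of $1$s, $Q\subseteq\mathbb Z_v$, satisfies $\{rq+s:q\in Q\}=\{0,1,\dots,w-1\}$ for some $r\in\mathbb Z_v^*$ and $s\in\mathbb Z_v$; hence $\mathcal C$ is equivalent to an OOC containing a sequence with $w$ consecutive $1$s, where equivalence means: the sequences of one are obtained from those of the other by applying a common map $(x_t)\mapsto(x_{r't})$ with $r'\in\mathbb Z_v^*$ followed by a cyclic shift of each sequence individually.
   Context: $\mathbb Z_v^*=\{r\in\mathbb Z_v:\gcd(r,v)=1\}$. A $(v,w,\lambda_a,\lambda_c)$-OOC is a family $\mathcal C$ of binary sequences $X=(x_t)_{t=0}^{v-1}$ (indices mod $v$) of weight $w$ with $\sum_tx_tx_{t+\delta}\le\lambda_a$ for all $X\in\mathcal C$, $0<\delta<v$, and $\sum_tx_ty_{t+\delta}\le\lambda_c$ for all distinct $X,Y\in\mathcal C$, $0\le\delta<v$. It is a-proper if $\lambda_a$ equals some auto-correlation value $\sum_tx_tx_{t+\delta}$ ($X\in\mathcal C$, $0<\delta<v$). *)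

theory Defs
  imports "HOL-Computational_Algebra.Primes"
begin

text \<open>A binary sequence of length v is modelled as a function nat => nat
  with values in {0,1} on indices 0..v-1 (indices read mod v) and value 0 outside.\<close>

definition binary_seq :: "nat \<Rightarrow> (nat \<Rightarrow> nat) \<Rightarrow> bool" where
  "binary_seq v x \<longleftrightarrow> (\<forall>t<v. x t \<in> {0, 1}) \<and> (\<forall>t\<ge>v. x t = 0)"

definition weight :: "nat \<Rightarrow> (nat \<Rightarrow> nat) \<Rightarrow> nat" where
  "weight v x = (\<Sum>t<v. x t)"

definition corr :: "nat \<Rightarrow> (nat \<Rightarrow> nat) \<Rightarrow> (nat \<Rightarrow> nat) \<Rightarrow> nat \<Rightarrow> nat" where
  "corr v x y \<delta> = (\<Sum>t<v. x t * y ((t + \<delta>) mod v))"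

definition is_OOC :: "nat \<Rightarrow> nat \<Rightarrow> nat \<Rightarrow> nat \<Rightarrow> (nat \<Rightarrow> nat) set \<Rightarrow> bool" where
  "is_OOC v w la lc C \<longleftrightarrow>
     (\<forall>X\<in>C. binary_seq v X \<and> weight v X = w) \<and>
     (\<forall>X\<in>C. \<forall>\<delta>. 0 < \<delta> \<and> \<delta> < v \<longrightarrow> corr v X X \<delta> \<le> la) \<and>
     (\<forall>X\<in>C. \<forall>Y\<in>C. X \<noteq> Y \<longrightarrow> (\<forall>\<delta><v. corr v X Y \<delta> \<le> lc))"

definition a_proper :: "nat \<Rightarrow> nat \<Rightarrow> (nat \<Rightarrow> nat) set \<Rightarrow> bool" where
  "a_proper v la C \<longleftrightarrow> (\<exists>X\<in>C. \<exists>\<delta>. 0 < \<delta> \<and> \<delta> < v \<and> corr v X X \<delta> = la)"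

definition ones :: "nat \<Rightarrow> (nat \<Rightarrow> nat) \<Rightarrow> nat set" where
  "ones v x = {t. t < v \<and> x t = 1}"

definition mult_shift :: "nat \<Rightarrow> nat \<Rightarrow> nat \<Rightarrow> (nat \<Rightarrow> nat) \<Rightarrow> (nat \<Rightarrow> nat)" where
  "mult_shift v r s x = (\<lambda>t. if t < v then x ((r * t + s) mod v) else 0)"

definition OOC_equiv :: "nat \<Rightarrow> (nat \<Rightarrow> nat) set \<Rightarrow> (nat \<Rightarrow> nat) set \<Rightarrow> bool" where
  "OOC_equiv v C C' \<longleftrightarrow>
     (\<exists>r'. r' < v \<and> coprime r' v \<and>
        (\<exists>\<sigma>. C' = (\<lambda>X. mult_shift v r' (\<sigma> X) X) ` C))"

end

theory Submission
  imports Defs "HOL-Number_Theory.Cong"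
begin

text \<open>If a sequence with support \<open>Q\<close> of size \<open>w\<close> has auto-correlation \<open>w - 1\<close> at the
  shift \<open>\<delta>\<close>, then every \<open>p \<in> Q\<close> except a single \<open>p\<^sub>0\<close> has \<open>p + \<delta> \<in> Q\<close>. The unit
  \<open>\<delta>\<close> (here \<open>v\<close> is prime) can be inverted; the affine map \<open>q \<mapsto> -\<delta>\<^sup>-\<^sup>1 (q - p\<^sub>0)\<close> sends
  \<open>p\<^sub>0\<close> to 0 and the step \<open>+\<delta>\<close> to \<open>-1\<close>, so the image of \<open>Q\<close> is closed under
  predecessors and therefore equals \<open>{0, \<dots>, w - 1}\<close>. Applying the inverse affine map as the
  common multiplier, with the matching shift for that one sequence, only reindexes the
  correlation sums, so the result is again an OOC with the same parameters.\<close>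

lemma cong_solve_coprime_lt:
  fixes a b v :: nat
  assumes "0 < v" "coprime a v" "coprime b v"
  shows "\<exists>x<v. coprime x v \<and> [a * x = b] (mod v)"
proof -
  obtain y where y: "[a * y = 1] (mod v)"
    using cong_solve_coprime_nat assms(2) by auto
  define x where "x = (y * b) mod v"
  have "[a * x = (a * y) * b] (mod v)"
    unfolding x_def by (simp add: cong_def mod_mult_right_eq mult.assoc)
  also have "[(a * y) * b = 1 * b] (mod v)"
    using y by (rule cong_scalar_right)
  finally have ax: "[a * x = b] (mod v)" by simp
  have "coprime (a * x) v"
    using cong_imp_coprime[OF cong_sym[OF ax] assms(3)] .
  then have "coprime x v" by simp
  moreover have "x < v" unfolding x_def using assms(1) by simp
  ultimately show ?thesis using ax by blast
qed

lemma affine_mod_inj: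
  fixes r v s t t' :: nat
  assumes "coprime r v" "t < v" "t' < v" "(r * t + s) mod v = (r * t' + s) mod v"
  shows "t = t'"
proof -
  have "[t * r + s = t' * r + s] (mod v)"
    using assms(4) by (simp add: cong_def mult.commute)
  then have "[t * r = t' * r] (mod v)" by (simp add: cong_add_rcancel_nat)
  then have "[t = t'] (mod v)" using assms(1) by (simp add: cong_mult_rcancel_nat)
  then show ?thesis using assms(2,3) cong_less_imp_eq_nat by blast
qed

lemma bij_betw_affine_mod:
  fixes r v s :: nat
  assumes "coprime r v"
  shows "bij_betw (\<lambda>t. (r * t + s) mod v) {..<v} {..<v}"
proof -
  have inj: "inj_on (\<lambda>t. (r * t + s) mod v) {..<v}"
    using affine_mod_inj[OF assms] by (auto intro: inj_onI)
  moreover have sub: "(\<lambda>t. (r * t + s) mod v) ` {..<v} \<subseteq> {..<v}" by auto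
  moreover have "card ((\<lambda>t. (r * t + s) mod v) ` {..<v}) = card {..<v}"
    using card_image[OF inj] .
  ultimately show ?thesis
    by (simp add: bij_betw_def card_subset_eq)
qed

lemma sum_affine_mod_reindex:
  fixes r v s :: nat and F :: "nat \<Rightarrow> 'a::comm_monoid_add"
  assumes "coprime r v"
  shows "(\<Sum>t<v. F ((r * t + s) mod v)) = (\<Sum>u<v. F u)"
  using sum.reindex_bij_betw[OF bij_betw_affine_mod[OF assms, of s]] .

lemma affine_mod_inverse:
  fixes r s v :: nat
  assumes "0 < v" "coprime r v"
  shows "\<exists>r' s'. r' < v \<and> coprime r' v \<and> s' < v \<and>
           (\<forall>t<v. (r * ((r' * t + s') mod v) + s) mod v = t)"
proof -
  obtain r' where r'v: "r' < v" and cr': "coprime r' v" and rr': "[r * r' = 1] (mod v)"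
    using cong_solve_coprime_lt[OF assms, of 1] by auto
  define c where "c = v - s mod v"
  define s' where "s' = (r' * c) mod v"
  have "(r * ((r' * t + s') mod v) + s) mod v = t" if "t < v" for t
  proof -
    have "[r * ((r' * t + s') mod v) + s = (r * r') * (t + c) + s] (mod v)"
      unfolding s'_def cong_def
      by (metis distrib_left mult.assoc mod_add_left_eq mod_add_right_eq mod_mult_right_eq)
    also have "[(r * r') * (t + c) + s = 1 * (t + c) + s mod v] (mod v)"
      using rr' by (intro cong_add cong_mult) (simp_all add: cong_def)
    also have "1 * (t + c) + s mod v = t + v"
      unfolding c_def
      using mod_less_divisor[OF assms(1), of s] by simp
    finally show ?thesis using that by (simp add: cong_def)
  qed
  moreover have "s' < v" unfolding s'_def using assms(1) by simp
  ultimately show ?thesis using r'v cr' by blast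
qed

lemma corr_mult_shift:
  fixes r v s1 s2 :: nat
  assumes "coprime r v" "s1 < v"
  shows "corr v (mult_shift v r s1 X) (mult_shift v r s2 Y) \<delta>
       = corr v X Y ((r * \<delta> + s2 + (v - s1)) mod v)"
proof -
  define D where "D = (r * \<delta> + s2 + (v - s1)) mod v"
  have idx: "(r * ((t + \<delta>) mod v) + s2) mod v = ((r * t + s1) mod v + D) mod v" for t
  proof -
    have "(r * ((t + \<delta>) mod v) + s2) mod v = (r * t + r * \<delta> + s2 + v) mod v"
      by (metis distrib_left mod_add_left_eq mod_mult_right_eq mod_add_self2)
    also have "r * t + r * \<delta> + s2 + v = r * t + s1 + (r * \<delta> + s2 + (v - s1))"
      using assms(2) by simp
    finally show ?thesis unfolding D_def by (simp add: mod_add_eq)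
  qed
  have "corr v (mult_shift v r s1 X) (mult_shift v r s2 Y) \<delta>
      = (\<Sum>t<v. X ((r * t + s1) mod v) * Y (((r * t + s1) mod v + D) mod v))"
    unfolding corr_def mult_shift_def using idx by (intro sum.cong) auto
  also have "\<dots> = (\<Sum>u<v. X u * Y ((u + D) mod v))"
    using sum_affine_mod_reindex[OF assms(1), of "\<lambda>u. X u * Y ((u + D) mod v)"] .
  finally show ?thesis unfolding corr_def D_def .
qed

lemma weight_mult_shift:
  assumes "coprime r v"
  shows "weight v (mult_shift v r s X) = weight v X"
  unfolding weight_def mult_shift_def using sum_affine_mod_reindex[OF assms, of X s] by simp

lemma binary_seq_mult_shift:
  assumes "0 < v" "binary_seq v X"
  shows "binary_seq v (mult_shift v r s X)"
  using assms unfolding binary_seq_def mult_shift_def by auto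

lemma is_OOC_image_mult_shift:
  assumes "coprime r v" "\<And>X. \<sigma> X < v" "is_OOC v w la lc C"
  shows "is_OOC v w la lc ((\<lambda>X. mult_shift v r (\<sigma> X) X) ` C)"
proof -
  let ?C' = "(\<lambda>X. mult_shift v r (\<sigma> X) X) ` C"
  have v0: "0 < v" using assms(2) by (rule le_less_trans[OF zero_le])
  have shift_ne_0: "(r * \<delta> + \<sigma> X + (v - \<sigma> X)) mod v \<noteq> 0" if "0 < \<delta>" "\<delta> < v" for \<delta> X
  proof
    assume "(r * \<delta> + \<sigma> X + (v - \<sigma> X)) mod v = 0"
    then have "(r * \<delta> + 0) mod v = (r * 0 + 0) mod v"
      using assms(2)[of X] by (simp add: less_imp_le)
    then show False using affine_mod_inj[OF assms(1) that(2) v0, of 0] that(1) by simp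
  qed
  have "binary_seq v Y \<and> weight v Y = w" if "Y \<in> ?C'" for Y
    using that assms(3) binary_seq_mult_shift[OF v0] weight_mult_shift[OF assms(1)]
    unfolding is_OOC_def by auto
  moreover have "corr v Y Y \<delta> \<le> la" if Y: "Y \<in> ?C'" and \<delta>: "0 < \<delta>" "\<delta> < v" for Y \<delta>
  proof -
    obtain X where X: "X \<in> C" "Y = mult_shift v r (\<sigma> X) X" using Y by blast
    have "0 < (r * \<delta> + \<sigma> X + (v - \<sigma> X)) mod v"
      using shift_ne_0[OF \<delta>] by blast
    then show ?thesis
      using X assms(3) corr_mult_shift[OF assms(1,2)] mod_less_divisor[OF v0]
      unfolding is_OOC_def by simp
  qed
  moreover have "corr v Y1 Y2 \<delta> \<le> lc" if Y: "Y1 \<in> ?C'" "Y2 \<in> ?C'" and ne: "Y1 \<noteq> Y2" for Y1 Y2 \<delta>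
  proof -
    obtain X1 X2 where X: "X1 \<in> C" "X2 \<in> C"
      and Y12: "Y1 = mult_shift v r (\<sigma> X1) X1" "Y2 = mult_shift v r (\<sigma> X2) X2"
      using Y by blast
    have "X1 \<noteq> X2" using ne Y12 by blast
    then show ?thesis
      using X Y12 assms(3) corr_mult_shift[OF assms(1,2)] mod_less_divisor[OF v0]
      unfolding is_OOC_def by auto
  qed
  ultimately show ?thesis unfolding is_OOC_def by blast
qed

lemma weight_eq_card_ones:
  assumes "binary_seq v X"
  shows "weight v X = card (ones v X)"
proof -
  have "weight v X = (\<Sum>t<v. of_bool (t \<in> ones v X))"
    unfolding weight_def using assms
    by (intro sum.cong refl) (auto simp: binary_seq_def ones_def)
  also have "\<dots> = card (ones v X)"
    by (simp add: ones_def Int_def)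
  finally show ?thesis .
qed

lemma corr_self_eq_card:
  assumes "binary_seq v X"
  shows "corr v X X \<delta> = card {t \<in> ones v X. (t + \<delta>) mod v \<in> ones v X}"
proof -
  have "corr v X X \<delta> = (\<Sum>t<v. of_bool (t \<in> ones v X \<and> (t + \<delta>) mod v \<in> ones v X))"
    unfolding corr_def
  proof (intro sum.cong refl)
    fix t assume t: "t \<in> {..<v}"
    then have "X t \<in> {0, 1}" "X ((t + \<delta>) mod v) \<in> {0, 1}"
      using assms unfolding binary_seq_def by auto
    then show "X t * X ((t + \<delta>) mod v) = of_bool (t \<in> ones v X \<and> (t + \<delta>) mod v \<in> ones v X)"
      using t unfolding ones_def by auto
  qed
  also have "\<dots> = card {t \<in> ones v X. (t + \<delta>) mod v \<in> ones v X}"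
    by (simp add: Int_def) (auto simp: ones_def intro!: arg_cong[where f = card])
  finally show ?thesis .
qed

lemma pred_closed_eq_lessThan:
  fixes S :: "nat set"
  assumes "finite S" "\<And>x. x \<in> S \<Longrightarrow> 0 < x \<Longrightarrow> x - 1 \<in> S"
  shows "S = {..<card S}"
proof -
  have down: "x - k \<in> S" if x: "x \<in> S" for x k
  proof (induction k)
    case 0
    show ?case using x by simp
  next
    case (Suc k)
    show ?case
    proof (cases "x - k = 0")
      case True
      then show ?thesis using Suc by simp
    next
      case False
      then have "x - k - 1 \<in> S" using assms(2) Suc by blast
      then show ?thesis by simp
    qed
  qed
  have "S \<subseteq> {..<card S}"
  proof
    fix x assume x: "x \<in> S"
    have "{..x} \<subseteq> S"
    proof
      fix j assume "j \<in> {..x}"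
      then show "j \<in> S" using down[OF x, of "x - j"] by simp
    qed
    then have "card {..x} \<le> card S" by (rule card_mono[OF assms(1)])
    then show "x \<in> {..<card S}" by simp
  qed
  then show ?thesis using assms(1) by (simp add: card_subset_eq)
qed

lemma ex_affine_mod_image_eq_lessThan:
  fixes v d p0 :: nat and Q :: "nat set"
  assumes d: "coprime d v" and Q: "Q \<subseteq> {..<v}" and p0: "p0 \<in> Q"
    and succ: "\<And>p. p \<in> Q \<Longrightarrow> p \<noteq> p0 \<Longrightarrow> (p + d) mod v \<in> Q"
  shows "\<exists>r s. r < v \<and> coprime r v \<and> s < v \<and> (\<lambda>q. (r * q + s) mod v) ` Q = {..<card Q}"
proof -
  have v0: "0 < v" using Q p0 by auto
  obtain e where ev: "e < v" and ce: "coprime e v" and de: "[d * e = v - 1] (mod v)"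
    using cong_solve_coprime_lt[OF v0 d coprime_diff_one_left_nat[OF v0]] by auto
  define s where "s = (e * ((v - 1) * p0)) mod v"
  \<comment> \<open>\<open>e \<equiv> -d\<^sup>-\<^sup>1\<close> and \<open>s \<equiv> -e p\<^sub>0\<close>, so \<open>\<phi>\<close> sends \<open>p\<^sub>0\<close> to 0 and \<open>+d\<close> to \<open>-1\<close>\<close>
  define \<phi> where "\<phi> q = (e * q + s) mod v" for q
  have \<phi>_lt: "\<phi> q < v" for q unfolding \<phi>_def using v0 by simp
  obtain m where m: "v = Suc m" using v0 gr0_implies_Suc by blast
  have "\<phi> p0 = (e * p0 + e * ((v - 1) * p0)) mod v"
    unfolding \<phi>_def s_def by (simp add: mod_add_right_eq)
  also have "e * p0 + e * ((v - 1) * p0) = v * (e * p0)"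
    unfolding m by (simp add: algebra_simps)
  finally have \<phi>_p0: "\<phi> p0 = 0" by simp
  have "[d * e + 1 = v - 1 + 1] (mod v)" using de by (rule cong_add) simp
  then have de1: "[d * e + 1 = 0] (mod v)" using v0 by (simp add: cong_def)
  have \<phi>_step: "[\<phi> ((p + d) mod v) + 1 = \<phi> p] (mod v)" for p
  proof -
    have "\<phi> ((p + d) mod v) = (e * (p + d) + s) mod v"
      unfolding \<phi>_def by (metis mod_add_left_eq mod_mult_right_eq)
    then have "[\<phi> ((p + d) mod v) + 1 = e * (p + d) + s + 1] (mod v)"
      unfolding cong_def by (metis mod_add_left_eq)
    also have "e * (p + d) + s + 1 = (e * p + s) + (d * e + 1)"
      by (simp add: algebra_simps)
    also have "[(e * p + s) + (d * e + 1) = (e * p + s) + 0] (mod v)"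
      using de1 by (intro cong_add) simp_all
    finally show ?thesis unfolding \<phi>_def by (simp add: cong_def)
  qed
  have pred: "x - 1 \<in> \<phi> ` Q" if x: "x \<in> \<phi> ` Q" "0 < x" for x
  proof -
    obtain p where p: "p \<in> Q" "x = \<phi> p" using x(1) by blast
    define y where "y = \<phi> ((p + d) mod v)"
    have "p \<noteq> p0" using \<phi>_p0 p(2) x(2) by auto
    then have "y \<in> \<phi> ` Q" unfolding y_def using succ p(1) by blast
    moreover have "(y + 1) mod v = x"
      using \<phi>_step[of p] \<phi>_lt[of p] unfolding y_def cong_def p(2) by simp
    moreover have "y < v" unfolding y_def by (rule \<phi>_lt)
    ultimately show ?thesis using x(2) by (cases "y + 1 = v") auto
  qed
  have "inj_on \<phi> Q"
    using affine_mod_inj[OF ce] Q unfolding \<phi>_def inj_on_def by blast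
  then have "card (\<phi> ` Q) = card Q" by (rule card_image)
  moreover have "finite Q" using Q finite_subset by blast
  ultimately have "\<phi> ` Q = {..<card Q}"
    using pred_closed_eq_lessThan[of "\<phi> ` Q"] pred by simp
  moreover have "s < v" unfolding s_def using v0 by simp
  ultimately show ?thesis using ev ce unfolding \<phi>_def by blast
qed

lemma ex_affine_mod_ones_eq_lessThan:
  assumes "0 < v" "coprime \<delta> v" "binary_seq v X" "weight v X = w" "corr v X X \<delta> = w - 1"
  shows "\<exists>r s. r < v \<and> coprime r v \<and> s < v \<and> (\<lambda>q. (r * q + s) mod v) ` ones v X = {0..<w}"
proof -
  let ?Q = "ones v X"
  have Q: "?Q \<subseteq> {..<v}" unfolding ones_def by auto
  then have fQ: "finite ?Q" by (rule finite_subset) simp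
  have cQ: "card ?Q = w" using weight_eq_card_ones[OF assms(3)] assms(4) by simp
  show ?thesis
  proof (cases "w = 0")
    case True
    then have "?Q = {}" using cQ fQ by simp
    moreover have "coprime (1 mod v) v" using assms(1) by (simp add: coprime_mod_left_iff)
    ultimately show ?thesis using True assms(1) by (intro exI[of _ "1 mod v"] exI[of _ 0]) simp
  next
    case False
    define A where "A = {t \<in> ?Q. (t + \<delta>) mod v \<in> ?Q}"
    have "A \<subseteq> ?Q" unfolding A_def by blast
    moreover have "card A = w - 1"
      using corr_self_eq_card[OF assms(3)] assms(5) unfolding A_def by simp
    ultimately have "card (?Q - A) = 1"
      using card_Diff_subset[OF finite_subset[OF _ fQ]] cQ False by simp
    then obtain p0 where p0: "?Q - A = {p0}" by (rule card_1_singletonE)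
    then have "p0 \<in> ?Q" by blast
    moreover have "(p + \<delta>) mod v \<in> ?Q" if "p \<in> ?Q" "p \<noteq> p0" for p
      using that p0 unfolding A_def by blast
    ultimately show ?thesis
      using ex_affine_mod_image_eq_lessThan[OF assms(2) Q] cQ by (simp add: atLeast0LessThan)
  qed
qed

lemma mult_shift_eq_indicator:
  assumes X: "binary_seq v X" and r: "coprime r v"
    and img: "(\<lambda>q. (r * q + s) mod v) ` ones v X = {0..<w}"
    and inv: "\<forall>t<v. (r * ((r' * t + s') mod v) + s) mod v = t"
    and "t < v"
  shows "mult_shift v r' s' X t = (if t < w then 1 else 0)"
proof -
  define u where "u = (r' * t + s') mod v"
  have u: "u < v" unfolding u_def using \<open>t < v\<close> by simp
  have "u \<in> ones v X \<longleftrightarrow> t < w"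
  proof
    assume "u \<in> ones v X"
    then show "t < w" using img inv \<open>t < v\<close> unfolding u_def by force
  next
    assume "t < w"
    then have "t \<in> (\<lambda>q. (r * q + s) mod v) ` ones v X" using img by simp
    then obtain q where q: "q \<in> ones v X" "(r * q + s) mod v = t" by blast
    moreover have "q < v" using q(1) unfolding ones_def by simp
    ultimately have "q = u"
      using affine_mod_inj[OF r _ u] inv \<open>t < v\<close> unfolding u_def by metis
    then show "u \<in> ones v X" using q(1) by simp
  qed
  moreover have "X u \<in> {0, 1}" using X u unfolding binary_seq_def by blast
  ultimately show ?thesis
    unfolding mult_shift_def using \<open>t < v\<close> u by (auto simp: ones_def u_def)
qed

theorem corollary5p5:
  fixes v w lc :: nat and C :: "(nat \<Rightarrow> nat) set"
  assumes "prime v"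
    and "is_OOC v w (w - 1) lc C"
    and "a_proper v (w - 1) C"
  shows "(\<exists>X\<in>C. \<exists>r s. r < v \<and> coprime r v \<and> s < v \<and>
            (\<lambda>q. (r * q + s) mod v) ` ones v X = {0..<w})
       \<and> (\<exists>C'. is_OOC v w (w - 1) lc C' \<and> OOC_equiv v C C' \<and>
            (\<exists>Y\<in>C'. \<forall>t<v. Y t = (if t < w then 1 else 0)))"
proof -
  obtain X0 \<delta> where X0: "X0 \<in> C" and \<delta>: "0 < \<delta>" "\<delta> < v"
    and corr: "corr v X0 X0 \<delta> = w - 1"
    using assms(3) unfolding a_proper_def by blast
  have "coprime \<delta> v"
    using \<delta> assms(1) by (metis coprime_commute dvd_imp_le not_le prime_imp_coprime)
  moreover have bX0: "binary_seq v X0" "weight v X0 = w"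
    using assms(2) X0 unfolding is_OOC_def by auto
  ultimately obtain r s where r: "r < v" "coprime r v" "s < v"
    and img: "(\<lambda>q. (r * q + s) mod v) ` ones v X0 = {0..<w}"
    using ex_affine_mod_ones_eq_lessThan[OF _ _ _ _ corr] \<delta> by blast
  obtain r' s' where r': "r' < v" "coprime r' v" "s' < v"
    and inv: "\<forall>t<v. (r * ((r' * t + s') mod v) + s) mod v = t"
    using affine_mod_inverse[OF _ r(2)] \<delta> by (meson less_trans)
  define \<sigma> where "\<sigma> X = (if X = X0 then s' else 0)" for X :: "nat \<Rightarrow> nat"
  define C' where "C' = (\<lambda>X. mult_shift v r' (\<sigma> X) X) ` C"
  have "\<sigma> X < v" for X unfolding \<sigma>_def using r'(3) \<delta> by simp
  then have "is_OOC v w (w - 1) lc C'"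
    unfolding C'_def using is_OOC_image_mult_shift[OF r'(2)] assms(2) by blast
  moreover have "OOC_equiv v C C'" unfolding OOC_equiv_def C'_def using r' by blast
  moreover have "mult_shift v r' s' X0 \<in> C'" unfolding C'_def \<sigma>_def using X0 by force
  ultimately show ?thesis
    using X0 r img mult_shift_eq_indicator[OF bX0(1) r(2) img inv] by blast
qed

end
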